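(* Let $\phi_{x,m}:\mathcal X\to\mathbb R^m$, $\phi_{z,m}:\mathcal Z\to\mathbb R^m$ be feature maps, $f(x;\theta):=m^{-1/2}\theta^\top\phi_{x,m}(x)$, $g(z;\varphi):=m^{-1/2}\varphi^\top\phi_{z,m}(z)$, with induced kernels $\tilde k_x(x,x')=\frac1m\phi_{x,m}(x)^\top\phi_{x,m}(x')$, $\tilde k_z(z,z')=\frac1m\phi_{z,m}(z)^\top\phi_{z,m}(z')$. Given data $(x_i,y_i,z_i)_{i=1}^n$ and $\lambda,\nu>0$, draw independently $\varphi_0\sim\mathcal N(0,\lambda\nu^{-1}I_m)$, $\theta_0\sim\mathcal N(0,I_m)$, $\tilde y_i\sim\mathcal N(y_i,\lambda)$. Let $\theta^*$ be the (min over $\theta$) solution of the saddle-point problem $$\min_{\theta\in\mathbb R^m}\max_{\varphi\in\mathbb R^m}\ \sum_{i=1}^n\Big((f(x_i;\theta)-\tilde y_i)g(z_i;\varphi)-\tfrac12g(z_i;\varphi)^2\Big)-\tfrac\nu2\|\varphi-\varphi_0\|_2^2+\tfrac\lambda2\|\theta-\theta_0\|_2^2 .$$ Then the random function $f(\cdot;\theta^* )$ is a Gaussian process whose finite-dimensional marginals are: for any test points $x_*$, $f(x_*;\theta^* )\sim\mathcal N(m,S)$ with $m=K_{*x}(\lambda I+LK_{xx})^{-1}LY$, $S=K_{**}-K_{*x}L(\lambda I+K_{xx}L)^{-1}K_{x*}$, $L=K_{zz}(K_{zz}+\nu I)^{-1}$, where all Gram matrices are computed with $\tilde k_x,\tilde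 k_z$.
   Context: $Y=(y_1,\dots,y_n)^\top$; $X=(x_i)$, $Z=(z_i)$; $K_{xx}=\tilde k_x(X,X)$, $K_{*x}=\tilde k_x(x_*,X)$, $K_{x*}=K_{*x}^\top$, $K_{**}=\tilde k_x(x_*,x_* )$, $K_{zz}=\tilde k_z(Z,Z)$. The Gaussian distribution $\mathcal N(m,S)$ above is the (random-feature-approximated) dual-IV quasi-posterior marginal at $x_*$. Randomness is over $\theta_0,\varphi_0,\tilde y$ with the data fixed. *)

theory Defs
  imports "HOL-Analysis.Analysis" "HOL-Probability.Probability"
begin

definition normal_measure :: "real \<Rightarrow> real \<Rightarrow> real measure" where
  "normal_measure mu v =
     (if v = 0 then return borel mu else density lborel (normal_density mu (sqrt v)))"

definition is_gaussian :: "(real^'k) measure \<Rightarrow> real^'k \<Rightarrow> real^'k^'k \<Rightarrow> bool" where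
  "is_gaussian N mu S \<longleftrightarrow> sets N = sets borel \<and>
     (\<forall>a. distr N borel (\<lambda>x. a \<bullet> x) = normal_measure (a \<bullet> mu) (a \<bullet> (S *v a)))"

definition rf_fun :: "('a \<Rightarrow> real^'m) \<Rightarrow> 'a \<Rightarrow> real^'m \<Rightarrow> real" where
  "rf_fun phi x theta = (theta \<bullet> phi x) / sqrt (real CARD('m))"

definition rf_kernel :: "('a \<Rightarrow> real^'m) \<Rightarrow> 'a \<Rightarrow> 'a \<Rightarrow> real" where
  "rf_kernel phi x x' = (phi x \<bullet> phi x') / real CARD('m)"

definition gram :: "('a \<Rightarrow> real^'m) \<Rightarrow> ('i \<Rightarrow> 'a) \<Rightarrow> ('j \<Rightarrow> 'a) \<Rightarrow> real^'j^'i" where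
  "gram phi A B = (\<chi> i j. rf_kernel phi (A i) (B j))"

definition dualiv_obj ::
  "('x \<Rightarrow> real^'m) \<Rightarrow> ('z \<Rightarrow> real^'m) \<Rightarrow> ('n \<Rightarrow> 'x) \<Rightarrow> ('n \<Rightarrow> 'z) \<Rightarrow> real \<Rightarrow> real
   \<Rightarrow> real^'m \<Rightarrow> real^'m \<Rightarrow> real^'n \<Rightarrow> real^'m \<Rightarrow> real^'m \<Rightarrow> real" where
  "dualiv_obj phix phiz X Z lam nu theta0 phi0 yt theta phi =
     (\<Sum>i\<in>UNIV. (rf_fun phix (X i) theta - yt $ i) * rf_fun phiz (Z i) phi
                 - (rf_fun phiz (Z i) phi)\<^sup>2 / 2)
     - nu / 2 * (norm (phi - phi0))\<^sup>2 + lam / 2 * (norm (theta - theta0))\<^sup>2"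

end

theory Submission
  imports Defs
begin

text \<open>The inner maximisation over \<open>\<phi>\<close> is a strictly concave quadratic, so \<open>\<phi>\<close> can be
  eliminated through the resolvent \<open>(K\<^sub>z\<^sub>z + \<nu>I)\<^sup>-\<^sup>1\<close>; the remaining problem in \<open>\<theta>\<close> is
  strongly convex with an explicit minimiser. Hence \<open>\<theta>\<^sup>*\<close> is an affine function of the
  independent Gaussian vectors \<open>(\<theta>\<^sub>0, \<phi>\<^sub>0, y\<^sup>~)\<close>, and every linear functional of
  \<open>f(x\<^sub>*;\<theta>\<^sup>*)\<close> is a sum of three independent normal variables. Its mean and variance
  reduce to the stated formulas by the symmetry of \<open>L\<close> and a push-through identity.\<close>

lemma invertible_matrix_inv:
  assumes "invertible A"
  shows "A ** matrix_inv A = mat 1" "matrix_inv A ** A = mat 1"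
  using someI_ex[OF assms[unfolded invertible_def]] unfolding matrix_inv_def by auto

lemma invertible_matrix_inv_vector:
  fixes A :: "real^'n^'n"
  assumes "invertible A"
  shows "A *v (matrix_inv A *v x) = x" "matrix_inv A *v (A *v x) = x"
  using invertible_matrix_inv[OF assms] by (simp_all add: matrix_vector_mul_assoc)

lemma invertible_if_trivial_kernel:
  fixes A :: "real^'n^'n"
  assumes "\<And>x. A *v x = 0 \<Longrightarrow> x = 0"
  shows "invertible A"
proof -
  have "inj ((*v) A)"
  proof (rule injI)
    fix x y assume "A *v x = A *v y"
    then have "A *v (x - y) = 0" by (simp add: matrix_vector_mult_diff_distrib)
    then show "x = y" using assms[of "x - y"] by simp
  qed
  then obtain B where "B ** A = mat 1" using matrix_left_invertible_injective by blast
  then show ?thesis using invertible_left_inverse by blast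
qed

lemma scalar_mat_mult_vector: "((c::real) *\<^sub>R mat 1) *v (x::real^'n) = c *\<^sub>R x"
  by (metis matrix_vector_mul_lid scaleR_matrix_vector_assoc)

lemma inner_matrix_vector: "(x::real^'n) \<bullet> ((A::real^'m^'n) *v y) = (x v* A) \<bullet> y"
  by (simp add: dot_lmul_matrix)

lemma inner_vector_matrix: "((x::real^'a) v* (A::real^'b^'a)) \<bullet> y = x \<bullet> (A *v y)"
  by (rule dot_lmul_matrix)

lemma gram_matrix_mult_vector: "((U::real^'m^'n) ** transpose U) *v x = U *v (x v* U)"
  by (simp add: matrix_vector_mul_assoc[symmetric])

lemma gram_matrix_quadratic_form:
  "(x::real^'n) \<bullet> (((U::real^'m^'n) ** transpose U) *v y) = (x v* U) \<bullet> (y v* U)"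
  by (simp add: gram_matrix_mult_vector inner_matrix_vector)

section \<open>Linear algebra of the dual-IV saddle point\<close>

text \<open>The rows of \<open>U\<close> and \<open>V\<close> are the scaled feature vectors
  \<open>m\<^sup>-\<^sup>1\<^sup>/\<^sup>2 \<phi>\<^sub>x(x\<^sub>i)\<close> and \<open>m\<^sup>-\<^sup>1\<^sup>/\<^sup>2 \<phi>\<^sub>z(z\<^sub>i)\<close>, so
  \<open>U *v \<theta>\<close> is the vector of values \<open>f(x\<^sub>i;\<theta>)\<close> and \<open>U ** transpose U\<close> is \<open>K\<^sub>x\<^sub>x\<close>.\<close>

locale dual_iv_features =
  fixes U V :: "real^'m^'n" and lam nu :: real
  assumes lam_pos: "lam > 0" and nu_pos: "nu > 0"
begin

definition "Kxx = U ** transpose U"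
definition "Kzz = V ** transpose V"
definition "R = matrix_inv (Kzz + nu *\<^sub>R mat 1)"
definition "L = Kzz ** R"
definition "H = lam *\<^sub>R mat 1 + L ** Kxx"
definition "G = lam *\<^sub>R mat 1 + Kxx ** L"

lemma Kxx_mult: "Kxx *v x = U *v (x v* U)"
  unfolding Kxx_def by (rule gram_matrix_mult_vector)

lemma Kzz_mult: "Kzz *v x = V *v (x v* V)"
  unfolding Kzz_def by (rule gram_matrix_mult_vector)

lemma Kxx_symmetric: "x \<bullet> (Kxx *v y) = (Kxx *v x) \<bullet> y"
  unfolding Kxx_def by (metis gram_matrix_quadratic_form inner_commute)

lemma Kzz_symmetric: "x \<bullet> (Kzz *v y) = (Kzz *v x) \<bullet> y"
  unfolding Kzz_def by (metis gram_matrix_quadratic_form inner_commute)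

lemma Kxx_psd: "x \<bullet> (Kxx *v x) \<ge> 0"
  unfolding Kxx_def gram_matrix_quadratic_form by simp

lemma Kzz_psd: "x \<bullet> (Kzz *v x) \<ge> 0"
  unfolding Kzz_def gram_matrix_quadratic_form by simp

lemma Kxx_kernel_if_quadratic_zero: "x \<bullet> (Kxx *v x) = 0 \<Longrightarrow> Kxx *v x = 0"
  unfolding Kxx_def gram_matrix_quadratic_form by (simp add: gram_matrix_mult_vector)

lemma invertible_Kzz_regularised: "invertible (Kzz + nu *\<^sub>R mat 1)"
proof (rule invertible_if_trivial_kernel)
  fix x assume "(Kzz + nu *\<^sub>R mat 1) *v x = 0"
  then have "x \<bullet> (Kzz *v x) + nu * (x \<bullet> x) = 0"
    by (metis inner_add_right inner_scaleR_right inner_zero_right matrix_vector_mult_add_rdistrib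
        scalar_mat_mult_vector)
  with Kzz_psd[of x] nu_pos have "x \<bullet> x = 0"
    by (smt (verit) inner_ge_zero mult_pos_pos mult_eq_0_iff)
  then show "x = 0" by simp
qed

lemma Kzz_R_right: "Kzz *v (R *v x) + nu *\<^sub>R (R *v x) = x"
  using invertible_matrix_inv_vector(1)[OF invertible_Kzz_regularised, of x] unfolding R_def
  by (simp add: matrix_vector_mult_add_rdistrib scalar_mat_mult_vector)

lemma R_Kzz_left: "R *v (Kzz *v x + nu *\<^sub>R x) = x"
  using invertible_matrix_inv_vector(2)[OF invertible_Kzz_regularised, of x] unfolding R_def
  by (simp add: matrix_vector_mult_add_rdistrib scalar_mat_mult_vector)

lemma L_mult: "L *v x = Kzz *v (R *v x)"
  by (simp add: L_def matrix_vector_mul_assoc)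

lemma R_Kzz_commute: "R *v (Kzz *v x) = Kzz *v (R *v x)"
proof -
  have "Kzz *v x = Kzz *v (Kzz *v (R *v x) + nu *\<^sub>R (R *v x))" by (simp add: Kzz_R_right)
  also have "\<dots> = Kzz *v (Kzz *v (R *v x)) + nu *\<^sub>R (Kzz *v (R *v x))"
    by (simp add: matrix_vector_right_distrib matrix_vector_mult_scaleR)
  finally show ?thesis by (simp add: R_Kzz_left)
qed

lemma R_symmetric: "x \<bullet> (R *v y) = (R *v x) \<bullet> y"
proof -
  have "x \<bullet> (R *v y) = (Kzz *v (R *v x) + nu *\<^sub>R (R *v x)) \<bullet> (R *v y)"
    by (simp add: Kzz_R_right)
  also have "\<dots> = (R *v x) \<bullet> (Kzz *v (R *v y) + nu *\<^sub>R (R *v y))"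
    by (simp add: inner_add_left inner_add_right Kzz_symmetric)
  also have "\<dots> = (R *v x) \<bullet> y" by (simp add: Kzz_R_right)
  finally show ?thesis .
qed

lemma L_symmetric: "x \<bullet> (L *v y) = (L *v x) \<bullet> y"
  by (simp add: L_mult Kzz_symmetric R_symmetric R_Kzz_commute[symmetric])

lemma L_quadratic_ge: "x \<bullet> (L *v x) \<ge> (L *v x) \<bullet> (L *v x)"
proof -
  let ?z = "R *v x"
  have "x \<bullet> (L *v x) = (Kzz *v ?z + nu *\<^sub>R ?z) \<bullet> (Kzz *v ?z)"
    by (simp add: Kzz_R_right L_mult)
  also have "\<dots> = (Kzz *v ?z) \<bullet> (Kzz *v ?z) + nu * (?z \<bullet> (Kzz *v ?z))"
    by (simp add: inner_add_left)
  finally show ?thesis using Kzz_psd[of ?z] nu_pos by (simp add: L_mult)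
qed

lemma L_psd: "x \<bullet> (L *v x) \<ge> 0"
  using L_quadratic_ge[of x] inner_ge_zero[of "L *v x"] by linarith

lemma diff_L_eq_R: "x - L *v x = nu *\<^sub>R (R *v x)"
  using Kzz_R_right[of x] by (simp add: L_mult algebra_simps)

lemma H_mult: "H *v x = lam *\<^sub>R x + L *v (Kxx *v x)"
  by (simp add: H_def matrix_vector_mult_add_rdistrib scalar_mat_mult_vector matrix_vector_mul_assoc)

lemma G_mult: "G *v x = lam *\<^sub>R x + Kxx *v (L *v x)"
  by (simp add: G_def matrix_vector_mult_add_rdistrib scalar_mat_mult_vector matrix_vector_mul_assoc)

lemma invertible_H: "invertible H"
proof (rule invertible_if_trivial_kernel)
  fix x assume Hx: "H *v x = 0"
  then have "lam * ((Kxx *v x) \<bullet> x) + (Kxx *v x) \<bullet> (L *v (Kxx *v x)) = 0"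
    by (metis H_mult inner_add_right inner_scaleR_right inner_zero_right)
  moreover have "(Kxx *v x) \<bullet> x \<ge> 0" using Kxx_psd[of x] by (simp add: inner_commute)
  moreover note L_psd[of "Kxx *v x"]
  ultimately have "x \<bullet> (Kxx *v x) = 0" using lam_pos
    by (smt (verit) inner_commute mult_pos_pos mult_eq_0_iff mult_nonneg_nonneg)
  then have "Kxx *v x = 0" by (rule Kxx_kernel_if_quadratic_zero)
  with Hx have "lam *\<^sub>R x = 0" by (simp add: H_mult)
  then show "x = 0" using lam_pos by simp
qed

lemma invertible_G: "invertible G"
proof (rule invertible_if_trivial_kernel)
  fix x assume Gx: "G *v x = 0"
  then have "lam * ((L *v x) \<bullet> x) + (L *v x) \<bullet> (Kxx *v (L *v x)) = 0"
    by (metis G_mult inner_add_right inner_scaleR_right inner_zero_right)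
  moreover have "(L *v x) \<bullet> x \<ge> (L *v x) \<bullet> (L *v x)"
    using L_quadratic_ge[of x] by (simp add: inner_commute)
  moreover note Kxx_psd[of "L *v x"]
  moreover have "(L *v x) \<bullet> (L *v x) \<ge> 0" by simp
  ultimately have "(L *v x) \<bullet> (L *v x) = 0" using lam_pos
    by (smt (verit) mult_pos_pos mult_eq_0_iff mult_nonneg_nonneg mult_left_mono)
  then have "L *v x = 0" by simp
  with Gx have "lam *\<^sub>R x = 0" by (simp add: G_mult)
  then show "x = 0" using lam_pos by simp
qed

definition "obj th0 ph0 y th ph =
   (U *v th - y) \<bullet> (V *v ph) - (V *v ph) \<bullet> (V *v ph) / 2
   - nu / 2 * ((ph - ph0) \<bullet> (ph - ph0)) + lam / 2 * ((th - th0) \<bullet> (th - th0))"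

lemma obj_bounded_above:
  "obj th0 ph0 y th ph \<le> (U *v th - y) \<bullet> (U *v th - y) / 2 + lam / 2 * ((th - th0) \<bullet> (th - th0))"
proof -
  let ?r = "U *v th - y" and ?b = "V *v ph"
  have "0 \<le> (?r - ?b) \<bullet> (?r - ?b)" by simp
  then have "?r \<bullet> ?b - ?b \<bullet> ?b / 2 \<le> ?r \<bullet> ?r / 2"
    by (simp add: inner_diff_left inner_diff_right inner_commute)
  moreover have "0 \<le> nu / 2 * ((ph - ph0) \<bullet> (ph - ph0))" using nu_pos by simp
  ultimately show ?thesis unfolding obj_def by linarith
qed

lemma obj_maximal_if_phi_stationary:
  assumes "(U *v th - y) v* V - (V *v ph) v* V - nu *\<^sub>R (ph - ph0) = 0"
  shows "obj th0 ph0 y th ph' \<le> obj th0 ph0 y th ph"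
proof -
  define d where "d = ph' - ph"
  have "obj th0 ph0 y th ph' = obj th0 ph0 y th ph
      + ((U *v th - y) v* V - (V *v ph) v* V - nu *\<^sub>R (ph - ph0)) \<bullet> d
      - (V *v d) \<bullet> (V *v d) / 2 - nu / 2 * (d \<bullet> d)"
  proof -
    have "\<And>a. d \<bullet> (a v* V) = a \<bullet> (V *v d)" by (simp add: inner_matrix_vector inner_commute)
    moreover have "(V *v d) \<bullet> (V *v ph) = (V *v ph) \<bullet> (V *v d)" by (simp add: inner_commute)
    moreover have "ph' = ph + d" by (simp add: d_def)
    ultimately show ?thesis
      unfolding obj_def
      by (simp add: matrix_vector_right_distrib inner_add_left inner_add_right inner_diff_left
          inner_diff_right inner_matrix_vector[symmetric] inner_commute algebra_simps)
  qed
  then have "obj th0 ph0 y th ph' = obj th0 ph0 y th ph - (V *v d) \<bullet> (V *v d) / 2 - nu / 2 * (d \<bullet> d)"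
    using assms by simp
  moreover have "0 \<le> (V *v d) \<bullet> (V *v d)" by simp
  moreover have "0 \<le> nu / 2 * (d \<bullet> d)" using nu_pos by simp
  ultimately show ?thesis by linarith
qed

lemma obj_quadratic_growth_if_theta_stationary:
  assumes "lam *\<^sub>R (th - th0) + (V *v ph) v* U = 0"
  shows "obj th0 ph0 y th ph + lam / 2 * ((th' - th) \<bullet> (th' - th)) \<le> obj th0 ph0 y th' ph"
proof -
  define d where "d = th' - th"
  have "obj th0 ph0 y th' ph = obj th0 ph0 y th ph
      + (lam *\<^sub>R (th - th0) + (V *v ph) v* U) \<bullet> d + lam / 2 * (d \<bullet> d)"
  proof -
    have "(U *v d) \<bullet> (V *v ph) = d \<bullet> ((V *v ph) v* U)"
      by (metis inner_matrix_vector inner_commute)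
    moreover have "th' = th + d" by (simp add: d_def)
    ultimately show ?thesis
      unfolding obj_def
      by (simp add: matrix_vector_right_distrib inner_add_left inner_add_right inner_diff_left
          inner_diff_right inner_commute algebra_simps field_simps)
  qed
  then show ?thesis using assms by (simp add: d_def)
qed

text \<open>The saddle point in closed form: \<open>\<phi>\<close> is eliminated through the resolvent \<open>R\<close>,
  after which the stationarity condition in \<open>\<theta>\<close> becomes a linear system with matrix \<open>H\<close>.\<close>

definition "theta_hat th0 ph0 y =
   th0 - (matrix_inv H *v (V *v ph0 + L *v (U *v th0 - y - V *v ph0))) v* U"

definition "phi_hat th0 ph0 y = ph0 + (R *v (U *v theta_hat th0 ph0 y - y - V *v ph0)) v* V"

lemma phi_hat_stationary:
  "(U *v theta_hat th0 ph0 y - y) v* V - (V *v phi_hat th0 ph0 y) v* V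
     - nu *\<^sub>R (phi_hat th0 ph0 y - ph0) = 0"
proof -
  define r where "r = U *v theta_hat th0 ph0 y - y"
  define e where "e = V *v ph0"
  define d where "d = R *v (r - e)"
  have ph: "phi_hat th0 ph0 y = ph0 + d v* V" by (simp add: phi_hat_def d_def r_def e_def)
  have "V *v phi_hat th0 ph0 y = e + Kzz *v d"
    by (simp add: ph e_def Kzz_mult matrix_vector_right_distrib)
  moreover have "r = e + Kzz *v d + nu *\<^sub>R d"
    using Kzz_R_right[of "r - e"] by (simp add: d_def algebra_simps)
  ultimately show ?thesis
    by (simp add: r_def[symmetric] ph vector_matrix_left_distrib scaleR_vector_matrix_assoc)
qed

lemma theta_hat_stationary:
  "lam *\<^sub>R (theta_hat th0 ph0 y - th0) + (V *v phi_hat th0 ph0 y) v* U = 0"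
proof -
  define e where "e = V *v ph0"
  define t where "t = U *v th0 - y - e"
  define c where "c = matrix_inv H *v (e + L *v t)"
  define r where "r = U *v theta_hat th0 ph0 y - y"
  have th: "theta_hat th0 ph0 y = th0 - c v* U" by (simp add: theta_hat_def c_def e_def t_def)
  have Vph: "V *v phi_hat th0 ph0 y = e + L *v (r - e)"
    by (simp add: phi_hat_def e_def r_def Kzz_mult[symmetric] L_mult matrix_vector_right_distrib)
  have "r - e = t - Kxx *v c"
    by (simp add: r_def th t_def Kxx_mult matrix_vector_mult_diff_distrib)
  moreover have "H *v c = e + L *v t"
    by (simp add: c_def invertible_matrix_inv_vector(1)[OF invertible_H])
  then have "lam *\<^sub>R c = e + L *v (t - Kxx *v c)"
    by (simp add: H_mult matrix_vector_mult_diff_distrib algebra_simps)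
  ultimately have "lam *\<^sub>R c = e + L *v (r - e)" by simp
  then show ?thesis
    by (simp add: th Vph scaleR_vector_matrix_assoc[symmetric] vector_matrix_mult_diff_distrib)
qed

lemma minimiser_eq_theta_hat:
  assumes "\<forall>th. (SUP ph. obj th0 ph0 y ts ph) \<le> (SUP ph. obj th0 ph0 y th ph)"
  shows "ts = theta_hat th0 ph0 y"
proof -
  let ?th = "theta_hat th0 ph0 y" and ?ph = "phi_hat th0 ph0 y"
  have sup_at_hat: "(SUP ph. obj th0 ph0 y ?th ph) = obj th0 ph0 y ?th ?ph"
  proof (rule antisym)
    show "(SUP ph. obj th0 ph0 y ?th ph) \<le> obj th0 ph0 y ?th ?ph"
      by (rule cSUP_least) (auto intro: obj_maximal_if_phi_stationary[OF phi_hat_stationary])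
    show "obj th0 ph0 y ?th ?ph \<le> (SUP ph. obj th0 ph0 y ?th ph)"
      by (rule cSUP_upper) (auto intro!: bdd_aboveI2 obj_maximal_if_phi_stationary[OF phi_hat_stationary])
  qed
  have "obj th0 ph0 y ?th ?ph + lam / 2 * ((ts - ?th) \<bullet> (ts - ?th)) \<le> obj th0 ph0 y ts ?ph"
    by (rule obj_quadratic_growth_if_theta_stationary[OF theta_hat_stationary])
  also have "\<dots> \<le> (SUP ph. obj th0 ph0 y ts ph)"
    by (rule cSUP_upper[OF _ bdd_aboveI2[OF obj_bounded_above]]) simp
  also have "\<dots> \<le> (SUP ph. obj th0 ph0 y ?th ph)" using assms by blast
  finally have "(ts - ?th) \<bullet> (ts - ?th) \<le> 0"
    using lam_pos by (simp add: sup_at_hat mult_le_0_iff)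
  then have "(ts - ?th) \<bullet> (ts - ?th) = 0" using inner_ge_zero[of "ts - ?th"] by linarith
  then show ?thesis by simp
qed

text \<open>Test points enter through a second feature matrix \<open>S\<close>, so that
  \<open>kxs S a = K\<^sub>x\<^sub>* a\<close>.\<close>

definition "kxs S a = U *v (a v* S)"
definition "dual_weight S a = kxs S a v* matrix_inv H"
definition "coef_theta0 S a = a v* S - (L *v dual_weight S a) v* U"
definition "coef_phi0 S a = - ((dual_weight S a - L *v dual_weight S a) v* V)"
definition "coef_y S a = L *v dual_weight S a"

lemma theta_hat_functional_affine:
  "a \<bullet> (S *v theta_hat th0 ph0 y) = coef_theta0 S a \<bullet> th0 + coef_phi0 S a \<bullet> ph0 + coef_y S a \<bullet> y"
proof -
  define e where "e = V *v ph0"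
  define w where "w = e + L *v (U *v th0 - y - e)"
  define c where "c = matrix_inv H *v w"
  define p where "p = dual_weight S a"
  have th: "theta_hat th0 ph0 y = th0 - c v* U" by (simp add: theta_hat_def c_def w_def e_def)
  have "a \<bullet> (S *v (c v* U)) = (c v* U) \<bullet> (a v* S)"
    by (simp add: inner_matrix_vector inner_commute)
  also have "\<dots> = c \<bullet> kxs S a" by (simp add: inner_vector_matrix kxs_def)
  also have "\<dots> = kxs S a \<bullet> (matrix_inv H *v w)" by (simp add: c_def inner_commute)
  also have "\<dots> = p \<bullet> w" by (simp add: inner_matrix_vector p_def dual_weight_def)
  also have "\<dots> = (p - L *v p) \<bullet> (V *v ph0) + (L *v p) \<bullet> (U *v th0) - (L *v p) \<bullet> y"
    by (simp add: w_def e_def L_symmetric inner_add_right inner_diff_right matrix_vector_right_distrib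
        matrix_vector_mult_diff_distrib inner_diff_left)
  also have "\<dots> = ((p - L *v p) v* V) \<bullet> ph0 + ((L *v p) v* U) \<bullet> th0 - (L *v p) \<bullet> y"
    by (simp only: inner_matrix_vector)
  finally have "a \<bullet> (S *v (c v* U)) = ((p - L *v p) v* V) \<bullet> ph0 + ((L *v p) v* U) \<bullet> th0 - (L *v p) \<bullet> y" .
  moreover have "a \<bullet> (S *v theta_hat th0 ph0 y) = (a v* S) \<bullet> th0 - a \<bullet> (S *v (c v* U))"
    by (simp add: th matrix_vector_mult_diff_distrib inner_diff_right inner_matrix_vector)
  ultimately show ?thesis
    by (simp add: coef_theta0_def coef_phi0_def coef_y_def p_def inner_diff_left)
qed

lemma coef_y_mean:
  "coef_y S a \<bullet> Y = a \<bullet> ((S ** transpose U ** matrix_inv H) *v (L *v Y))"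
proof -
  define z where "z = matrix_inv H *v (L *v Y)"
  have "coef_y S a \<bullet> Y = dual_weight S a \<bullet> (L *v Y)" by (simp add: coef_y_def L_symmetric)
  also have "\<dots> = kxs S a \<bullet> z" by (simp add: dual_weight_def z_def inner_vector_matrix)
  also have "\<dots> = a \<bullet> (S *v (z v* U))"
    unfolding kxs_def by (metis inner_vector_matrix inner_commute)
  finally show ?thesis by (simp add: z_def matrix_vector_mul_assoc[symmetric])
qed

text \<open>The push-through identity \<open>(\<lambda>I + L K\<^sub>x\<^sub>x)\<^sup>-\<^sup>T = (\<lambda>I + K\<^sub>x\<^sub>x L)\<^sup>-\<^sup>1\<close>.\<close>

lemma G_dual_weight: "G *v dual_weight S a = kxs S a"
proof (rule vector_eq_rdot[THEN iffD1], intro allI)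
  fix y
  have "(G *v dual_weight S a) \<bullet> y = dual_weight S a \<bullet> (H *v y)"
    by (simp add: G_mult H_mult inner_add_left inner_add_right Kxx_symmetric[symmetric] L_symmetric)
  also have "\<dots> = kxs S a \<bullet> y"
    by (simp add: dual_weight_def inner_vector_matrix invertible_matrix_inv_vector(2)[OF invertible_H])
  finally show "(G *v dual_weight S a) \<bullet> y = kxs S a \<bullet> y" .
qed

lemma inner_coef_theta0:
  "coef_theta0 S a \<bullet> coef_theta0 S a
     = (a v* S) \<bullet> (a v* S) - 2 * ((L *v dual_weight S a) \<bullet> kxs S a)
       + (L *v dual_weight S a) \<bullet> (Kxx *v (L *v dual_weight S a))"
proof -
  define h where "h = L *v dual_weight S a"
  have "(a v* S) \<bullet> (h v* U) = h \<bullet> kxs S a"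
    unfolding kxs_def by (metis inner_vector_matrix inner_commute)
  moreover have "(h v* U) \<bullet> (h v* U) = h \<bullet> (Kxx *v h)"
    by (simp add: Kxx_def gram_matrix_quadratic_form)
  ultimately show ?thesis
    by (simp add: coef_theta0_def h_def[symmetric] inner_diff_left inner_diff_right inner_commute)
qed

lemma inner_coef_phi0:
  "coef_phi0 S a \<bullet> coef_phi0 S a = nu * nu * ((R *v dual_weight S a) \<bullet> (L *v dual_weight S a))"
proof -
  define p where "p = dual_weight S a"
  have "coef_phi0 S a \<bullet> coef_phi0 S a = (p - L *v p) \<bullet> (Kzz *v (p - L *v p))"
    by (simp add: coef_phi0_def p_def Kzz_def gram_matrix_quadratic_form)
  also have "\<dots> = nu * nu * ((R *v p) \<bullet> (Kzz *v (R *v p)))"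
    by (simp add: diff_L_eq_R matrix_vector_mult_scaleR)
  finally show ?thesis by (simp add: p_def L_mult)
qed

lemma posterior_cov_quadratic_form:
  "a \<bullet> ((S ** transpose S - S ** transpose U ** L ** matrix_inv G ** transpose (S ** transpose U)) *v a)
     = (a v* S) \<bullet> (a v* S) - (L *v dual_weight S a) \<bullet> kxs S a"
proof -
  let ?q = "kxs S a"
  have p: "dual_weight S a = matrix_inv G *v ?q"
    using invertible_matrix_inv_vector(2)[OF invertible_G, of "dual_weight S a"]
    by (simp add: G_dual_weight)
  have "transpose (S ** transpose U) *v a = ?q"
    by (simp add: matrix_transpose_mul kxs_def matrix_vector_mul_assoc[symmetric])
  then have "a \<bullet> ((S ** transpose U ** L ** matrix_inv G ** transpose (S ** transpose U)) *v a)
      = a \<bullet> (S *v ((L *v (matrix_inv G *v ?q)) v* U))"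
    by (simp only: matrix_vector_mul_assoc[symmetric]) simp
  also have "\<dots> = (a v* S) \<bullet> ((L *v dual_weight S a) v* U)" by (simp add: inner_matrix_vector p)
  also have "\<dots> = (L *v dual_weight S a) \<bullet> ?q"
    unfolding kxs_def by (metis inner_vector_matrix inner_commute)
  finally show ?thesis
    by (simp add: gram_matrix_quadratic_form matrix_vector_mult_diff_rdistrib inner_diff_right)
qed

lemma coef_variance:
  "coef_theta0 S a \<bullet> (mat 1 *v coef_theta0 S a)
   + coef_phi0 S a \<bullet> (((lam / nu) *\<^sub>R mat 1) *v coef_phi0 S a)
   + coef_y S a \<bullet> ((lam *\<^sub>R mat 1) *v coef_y S a)
   = a \<bullet> ((S ** transpose S - S ** transpose U ** L ** matrix_inv G ** transpose (S ** transpose U)) *v a)"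
proof -
  define p where "p = dual_weight S a"
  define h where "h = L *v p"
  have decomp: "nu * ((R *v p) \<bullet> h) + h \<bullet> h = p \<bullet> h"
  proof -
    have "p = h + nu *\<^sub>R (R *v p)" using Kzz_R_right[of p] by (simp add: h_def L_mult add.commute)
    then have "p \<bullet> h = (h + nu *\<^sub>R (R *v p)) \<bullet> h" by simp
    then show ?thesis by (simp add: inner_add_left)
  qed
  have "h \<bullet> kxs S a = p \<bullet> (L *v (G *v p))" by (simp add: G_dual_weight h_def p_def L_symmetric)
  also have "\<dots> = p \<bullet> (L *v (Kxx *v h)) + lam * (p \<bullet> h)"
    by (simp add: G_mult h_def matrix_vector_right_distrib matrix_vector_mult_scaleR inner_add_right)
  finally have push: "h \<bullet> (Kxx *v h) + lam * (p \<bullet> h) = h \<bullet> kxs S a"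
    by (simp add: L_symmetric h_def)
  have "coef_theta0 S a \<bullet> (mat 1 *v coef_theta0 S a)
      + coef_phi0 S a \<bullet> (((lam / nu) *\<^sub>R mat 1) *v coef_phi0 S a)
      + coef_y S a \<bullet> ((lam *\<^sub>R mat 1) *v coef_y S a)
      = (a v* S) \<bullet> (a v* S) - 2 * (h \<bullet> kxs S a) + h \<bullet> (Kxx *v h) + lam * (nu * ((R *v p) \<bullet> h) + h \<bullet> h)"
    using nu_pos
    by (simp add: scalar_mat_mult_vector inner_coef_theta0 inner_coef_phi0 coef_y_def
        p_def[symmetric] h_def[symmetric] field_simps)
  also have "\<dots> = (a v* S) \<bullet> (a v* S) - h \<bullet> kxs S a" using decomp push by simp
  finally show ?thesis by (simp add: posterior_cov_quadratic_form h_def p_def)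
qed

end

section \<open>Sums of independent normal variables\<close>

lemma real_distribution_normal_measure:
  assumes "v \<ge> 0" shows "real_distribution (normal_measure mu v)"
proof (cases "v = 0")
  case True
  then show ?thesis unfolding normal_measure_def
    by (simp add: real_distribution_def real_distribution_axioms_def prob_space_return)
next
  case False
  then show ?thesis unfolding normal_measure_def
    using prob_space_normal_density[of "sqrt v" mu] assms
    by (simp add: real_distribution_def real_distribution_axioms_def)
qed

lemma char_normal_measure:
  assumes "v \<ge> 0"
  shows "char (normal_measure mu v) t = exp (\<i> * complex_of_real (t * mu) - complex_of_real (v * t\<^sup>2 / 2))"
proof (cases "v = 0")
  case True
  then show ?thesis unfolding normal_measure_def char_def by (simp add: integral_return)
next
  case False
  with assms have v: "v > 0" by simp
  define N where "N = density lborel (normal_density 0 1)"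
  interpret N: prob_space N unfolding N_def by (rule prob_space_normal_density) simp
  have [measurable_cong]: "sets N = sets borel" by (simp add: N_def)
  have "distributed N lborel (\<lambda>x. x) (normal_density 0 1)"
    unfolding distributed_def N_def by (auto simp: distr_id2)
  then have "distributed N lborel (\<lambda>x. mu + sqrt v * x) (normal_density (mu + sqrt v * 0) (\<bar>sqrt v\<bar> * 1))"
    by (rule N.normal_density_affine) (use v in auto)
  then have N_affine: "normal_measure mu v = distr N lborel (\<lambda>x. mu + sqrt v * x)"
    using v by (simp add: normal_measure_def distributed_def)
  have "char (normal_measure mu v) t = (CLINT x|N. iexp (t * mu) * iexp ((t * sqrt v) * x))"
    unfolding N_affine char_def
    by (subst integral_distr) (auto simp: algebra_simps exp_add[symmetric])
  also have "\<dots> = iexp (t * mu) * char N (t * sqrt v)"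
    unfolding char_def by simp
  also have "\<dots> = iexp (t * mu) * complex_of_real (exp (- ((t * sqrt v)\<^sup>2) / 2))"
    by (simp add: N_def char_std_normal_distribution)
  also have "\<dots> = iexp (t * mu) * exp (complex_of_real (- (v * t\<^sup>2 / 2)))"
  proof -
    have "(t * sqrt v)\<^sup>2 = v * t\<^sup>2" using v by (simp add: power_mult_distrib)
    then show ?thesis by (simp only: exp_of_real) simp
  qed
  also have "\<dots> = exp (\<i> * complex_of_real (t * mu) - complex_of_real (v * t\<^sup>2 / 2))"
    by (subst exp_add[symmetric]) simp
  finally show ?thesis .
qed

lemma (in prob_space) normal_measure_add_indep:
  assumes indep: "indep_var borel X borel Y"
    and X: "distr M borel X = normal_measure m1 v1" and Y: "distr M borel Y = normal_measure m2 v2"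
    and v: "v1 \<ge> 0" "v2 \<ge> 0"
  shows "distr M borel (\<lambda>w. X w + Y w) = normal_measure (m1 + m2) (v1 + v2)"
proof (rule Levy_uniqueness)
  have [measurable]: "X \<in> borel_measurable M" "Y \<in> borel_measurable M"
    using indep by (auto elim: indep_var_rv1 indep_var_rv2)
  show "real_distribution (distr M borel (\<lambda>w. X w + Y w))" by (auto intro!: real_distribution_distr)
  show "real_distribution (normal_measure (m1 + m2) (v1 + v2))"
    using v by (intro real_distribution_normal_measure) simp
  show "char (distr M borel (\<lambda>w. X w + Y w)) = char (normal_measure (m1 + m2) (v1 + v2))"
  proof
    fix t
    have "char (distr M borel (\<lambda>w. X w + Y w)) t
        = exp (\<i> * complex_of_real (t * m1) - complex_of_real (v1 * t\<^sup>2 / 2))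
          * exp (\<i> * complex_of_real (t * m2) - complex_of_real (v2 * t\<^sup>2 / 2))"
      by (simp add: char_distr_add[OF indep] X Y char_normal_measure v)
    also have "\<dots> = exp (\<i> * complex_of_real (t * (m1 + m2)) - complex_of_real ((v1 + v2) * t\<^sup>2 / 2))"
      unfolding exp_add[symmetric] by (rule arg_cong[where f = exp]) (simp add: field_simps)
    finally show "char (distr M borel (\<lambda>w. X w + Y w)) t = char (normal_measure (m1 + m2) (v1 + v2)) t"
      using v by (simp add: char_normal_measure)
  qed
qed

lemma distr_pair_measure_snd:
  assumes "prob_space P" and "sigma_finite_measure Q" and sets_Q: "sets Q = sets N"
  shows "distr (P \<Otimes>\<^sub>M Q) N snd = Q"
proof -
  interpret P: prob_space P by fact
  interpret Q: sigma_finite_measure Q by fact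
  interpret PQ: pair_sigma_finite P Q by unfold_locales
  have "distr (P \<Otimes>\<^sub>M Q) N snd = distr (distr (Q \<Otimes>\<^sub>M P) (P \<Otimes>\<^sub>M Q) (\<lambda>(x, y). (y, x))) N snd"
    by (simp add: PQ.distr_pair_swap[symmetric])
  also have "\<dots> = distr (Q \<Otimes>\<^sub>M P) N (snd \<circ> (\<lambda>(x, y). (y, x)))"
    using measurable_cong_sets[OF refl sets_Q]
    by (intro distr_distr) (auto intro: measurable_pair_swap')
  also have "\<dots> = distr (Q \<Otimes>\<^sub>M P) Q fst" by (rule distr_cong) (auto simp: sets_Q)
  also have "\<dots> = Q" by (rule P.distr_pair_fst)
  finally show ?thesis .
qed

lemma (in prob_space) indep_var_compose_if_joint_distr_product:
  assumes [measurable]: "X \<in> measurable M S" "Y \<in> measurable M T"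
    and joint: "distr M (S \<Otimes>\<^sub>M T) (\<lambda>w. (X w, Y w)) = distr M S X \<Otimes>\<^sub>M distr M T Y"
    and [measurable]: "f \<in> borel_measurable S" "(g :: _ \<Rightarrow> real) \<in> borel_measurable T"
  shows "indep_var borel (\<lambda>w. f (X w)) borel (\<lambda>w. g (Y w))"
proof -
  have "distr M borel (\<lambda>w. f (X w)) \<Otimes>\<^sub>M distr M borel (\<lambda>w. g (Y w))
      = distr (distr M S X) borel f \<Otimes>\<^sub>M distr (distr M T Y) borel g"
    by (simp add: distr_distr comp_def)
  also have "\<dots> = distr (distr M S X \<Otimes>\<^sub>M distr M T Y) (borel \<Otimes>\<^sub>M borel) (\<lambda>(x, y). (f x, g y))"
    by (rule pair_measure_distr)
      (auto intro!: prob_space_imp_sigma_finite prob_space.prob_space_distr prob_space_distr)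
  also have "\<dots> = distr M (borel \<Otimes>\<^sub>M borel) (\<lambda>w. (f (X w), g (Y w)))"
    unfolding joint[symmetric] by (subst distr_distr) (auto simp: comp_def)
  finally show ?thesis unfolding indep_var_distribution_eq by auto
qed

lemma (in prob_space) normal_measure_sum3_indep:
  assumes [measurable]: "X \<in> measurable M S" "Y \<in> measurable M T" "Z \<in> measurable M W"
    and joint: "distr M (S \<Otimes>\<^sub>M (T \<Otimes>\<^sub>M W)) (\<lambda>w. (X w, (Y w, Z w)))
         = distr M S X \<Otimes>\<^sub>M (distr M T Y \<Otimes>\<^sub>M distr M W Z)"
    and [measurable]: "f \<in> borel_measurable S" "g \<in> borel_measurable T" "h \<in> borel_measurable W"
    and f: "distr M borel (\<lambda>w. f (X w)) = normal_measure m1 v1"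
    and g: "distr M borel (\<lambda>w. g (Y w)) = normal_measure m2 v2"
    and h: "distr M borel (\<lambda>w. h (Z w)) = normal_measure m3 v3"
    and v: "v1 \<ge> 0" "v2 \<ge> 0" "v3 \<ge> 0"
  shows "distr M borel (\<lambda>w. f (X w) + g (Y w) + h (Z w)) = normal_measure (m1 + m2 + m3) (v1 + v2 + v3)"
proof -
  have ps: "prob_space (distr M S X)" "prob_space (distr M T Y)" "prob_space (distr M W Z)"
    by (auto intro!: prob_space_distr)
  interpret TW: pair_prob_space "distr M T Y" "distr M W Z"
    using ps(2,3) by (simp add: pair_prob_space_def pair_sigma_finite_def prob_space_imp_sigma_finite)
  have joint_YZ: "distr M (T \<Otimes>\<^sub>M W) (\<lambda>w. (Y w, Z w)) = distr M T Y \<Otimes>\<^sub>M distr M W Z"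
  proof -
    have "distr M (T \<Otimes>\<^sub>M W) (\<lambda>w. (Y w, Z w))
        = distr (distr M (S \<Otimes>\<^sub>M (T \<Otimes>\<^sub>M W)) (\<lambda>w. (X w, (Y w, Z w)))) (T \<Otimes>\<^sub>M W) snd"
      by (subst distr_distr) (auto simp: comp_def)
    also have "\<dots> = distr M T Y \<Otimes>\<^sub>M distr M W Z"
      unfolding joint
    proof (rule distr_pair_measure_snd[OF ps(1)])
      show "sigma_finite_measure (distr M T Y \<Otimes>\<^sub>M distr M W Z)"
        by (rule TW.P.sigma_finite_measure_axioms)
      show "sets (distr M T Y \<Otimes>\<^sub>M distr M W Z) = sets (T \<Otimes>\<^sub>M W)"
        by (intro sets_pair_measure_cong) auto
    qed
    finally show ?thesis .
  qed
  have "distr M (S \<Otimes>\<^sub>M (T \<Otimes>\<^sub>M W)) (\<lambda>w. (X w, (Y w, Z w)))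
      = distr M S X \<Otimes>\<^sub>M distr M (T \<Otimes>\<^sub>M W) (\<lambda>w. (Y w, Z w))"
    by (simp add: joint joint_YZ)
  from indep_var_compose_if_joint_distr_product[OF _ _ this, of f "\<lambda>p. g (fst p) + h (snd p)"]
  have indep_X_YZ: "indep_var borel (\<lambda>w. f (X w)) borel (\<lambda>w. g (Y w) + h (Z w))"
    by simp
  have indep_Y_Z: "indep_var borel (\<lambda>w. g (Y w)) borel (\<lambda>w. h (Z w))"
    by (rule indep_var_compose_if_joint_distr_product[OF _ _ joint_YZ]) simp_all
  have "distr M borel (\<lambda>w. f (X w) + (g (Y w) + h (Z w))) = normal_measure (m1 + (m2 + m3)) (v1 + (v2 + v3))"
    using v by (intro normal_measure_add_indep[OF indep_X_YZ f] normal_measure_add_indep[OF indep_Y_Z g h]) simp_all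
  then show ?thesis by (simp add: add.assoc)
qed

lemma is_gaussian_functional_distr:
  assumes "is_gaussian (distr M borel V) m S" and "V \<in> borel_measurable M"
  shows "distr M borel (\<lambda>w. a \<bullet> V w) = normal_measure (a \<bullet> m) (a \<bullet> (S *v a))"
proof -
  have "distr M borel (\<lambda>w. a \<bullet> V w) = distr (distr M borel V) borel (\<lambda>x. a \<bullet> x)"
    using assms(2) by (subst distr_distr) (auto simp: comp_def)
  then show ?thesis using assms(1) unfolding is_gaussian_def by simp
qed

text \<open>The nonnegativity hypotheses are not implied by \<open>is_gaussian\<close>: for \<open>v < 0\<close>,
  \<open>normal_measure \<mu> v\<close> is the normal law of variance \<open>-v\<close>.\<close>

lemma (in prob_space) is_gaussian_affine_of_indep_gaussians:
  fixes F :: "'a \<Rightarrow> real^'k"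
  assumes meas [measurable]: "X \<in> borel_measurable M" "Y \<in> borel_measurable M" "Z \<in> borel_measurable M"
    and joint: "distr M (borel \<Otimes>\<^sub>M (borel \<Otimes>\<^sub>M borel)) (\<lambda>w. (X w, (Y w, Z w)))
         = distr M borel X \<Otimes>\<^sub>M (distr M borel Y \<Otimes>\<^sub>M distr M borel Z)"
    and X: "is_gaussian (distr M borel X) m1 S1" and Y: "is_gaussian (distr M borel Y) m2 S2"
    and Z: "is_gaussian (distr M borel Z) m3 S3"
    and psd: "\<And>b. b \<bullet> (S1 *v b) \<ge> 0" "\<And>b. b \<bullet> (S2 *v b) \<ge> 0" "\<And>b. b \<bullet> (S3 *v b) \<ge> 0"
    and affine: "\<And>a w. a \<bullet> F w = \<alpha> a \<bullet> X w + \<beta> a \<bullet> Y w + \<gamma> a \<bullet> Z w"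
    and mean: "\<And>a. a \<bullet> mu = \<alpha> a \<bullet> m1 + \<beta> a \<bullet> m2 + \<gamma> a \<bullet> m3"
    and cov: "\<And>a. a \<bullet> (S *v a) = \<alpha> a \<bullet> (S1 *v \<alpha> a) + \<beta> a \<bullet> (S2 *v \<beta> a) + \<gamma> a \<bullet> (S3 *v \<gamma> a)"
  shows "is_gaussian (distr M borel F) mu S"
proof -
  have [measurable]: "F \<in> borel_measurable M"
  proof (rule borel_measurable_euclidean_space[THEN iffD2], intro ballI)
    fix i :: "real^'k"
    have "(\<lambda>w. F w \<bullet> i) = (\<lambda>w. \<alpha> i \<bullet> X w + \<beta> i \<bullet> Y w + \<gamma> i \<bullet> Z w)"
      using affine by (simp add: inner_commute)
    then show "(\<lambda>w. F w \<bullet> i) \<in> borel_measurable M" by simp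
  qed
  have "distr (distr M borel F) borel ((\<bullet>) a) = normal_measure (a \<bullet> mu) (a \<bullet> (S *v a))" for a
  proof -
    have "distr (distr M borel F) borel ((\<bullet>) a) = distr M borel (\<lambda>w. a \<bullet> F w)"
      by (subst distr_distr) (auto simp: comp_def)
    also have "\<dots> = distr M borel (\<lambda>w. \<alpha> a \<bullet> X w + \<beta> a \<bullet> Y w + \<gamma> a \<bullet> Z w)"
      by (simp add: affine)
    also have "\<dots> = normal_measure (a \<bullet> mu) (a \<bullet> (S *v a))"
      unfolding mean cov
      by (rule normal_measure_sum3_indep[OF _ _ _ joint, where f = "\<lambda>x. \<alpha> a \<bullet> x"
            and g = "\<lambda>x. \<beta> a \<bullet> x" and h = "\<lambda>x. \<gamma> a \<bullet> x"])
        (simp_all add: is_gaussian_functional_distr[OF X meas(1)] is_gaussian_functional_distr[OF Y meas(2)]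
          is_gaussian_functional_distr[OF Z meas(3)] psd)
    finally show ?thesis .
  qed
  then show ?thesis unfolding is_gaussian_def by simp
qed

section \<open>The random-feature model\<close>

definition feature_matrix :: "('a \<Rightarrow> real^'m) \<Rightarrow> ('i \<Rightarrow> 'a) \<Rightarrow> real^'m^'i" where
  "feature_matrix phi A = (\<chi> i. (1 / sqrt (real CARD('m))) *\<^sub>R phi (A i))"

lemma gram_eq_feature_matrix: "gram phi A B = feature_matrix phi A ** transpose (feature_matrix phi B)"
proof -
  have "sqrt (real CARD('m)) * sqrt (real CARD('m)) = real CARD('m)" by simp
  then show ?thesis
    unfolding gram_def feature_matrix_def rf_kernel_def
    by (simp add: vec_eq_iff matrix_matrix_mult_def transpose_def inner_vec_def sum_divide_distrib
        field_simps)
qed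

lemma rf_fun_eq_feature_matrix: "rf_fun phi (A i) th = (feature_matrix phi A *v th) $ i"
  unfolding rf_fun_def feature_matrix_def matrix_vector_mul_component
  by (simp add: inner_commute divide_inverse)

lemma dualiv_obj_eq_obj:
  fixes X :: "'n::finite \<Rightarrow> 'x" and phix :: "'x \<Rightarrow> real^'m"
  assumes "lam > 0" "nu > 0"
  shows "dualiv_obj phix phiz X Z lam nu th0 ph0 y th ph
         = dual_iv_features.obj (feature_matrix phix X) (feature_matrix phiz Z) lam nu th0 ph0 y th ph"
proof -
  interpret dual_iv_features "feature_matrix phix X" "feature_matrix phiz Z" lam nu
    using assms by unfold_locales
  have "(\<Sum>i\<in>UNIV. (rf_fun phix (X i) th - y $ i) * rf_fun phiz (Z i) ph - (rf_fun phiz (Z i) ph)\<^sup>2 / 2)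
     = (feature_matrix phix X *v th - y) \<bullet> (feature_matrix phiz Z *v ph)
       - (feature_matrix phiz Z *v ph) \<bullet> (feature_matrix phiz Z *v ph) / 2"
    by (simp add: rf_fun_eq_feature_matrix inner_vec_def sum_subtractf sum_divide_distrib power2_eq_square)
  then show ?thesis
    unfolding dualiv_obj_def obj_def by (simp add: power2_norm_eq_inner)
qed

theorem mainTheorem6:
  fixes M :: "'w measure"
    and phix :: "'x \<Rightarrow> real^'m" and phiz :: "'z \<Rightarrow> real^'m"
    and X :: "'n::finite \<Rightarrow> 'x" and Z :: "'n \<Rightarrow> 'z" and Y :: "real^'n"
    and lam nu :: real
    and theta0 phi0 :: "'w \<Rightarrow> real^'m" and yt :: "'w \<Rightarrow> real^'n"
    and thetastar :: "'w \<Rightarrow> real^'m"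
    and xs :: "'k::finite \<Rightarrow> 'x"
  assumes "prob_space M"
    and "lam > 0" and "nu > 0"
    and "theta0 \<in> borel_measurable M" and "phi0 \<in> borel_measurable M" and "yt \<in> borel_measurable M"
    and "is_gaussian (distr M borel phi0) 0 ((lam / nu) *\<^sub>R mat 1)"
    and "is_gaussian (distr M borel theta0) 0 (mat 1)"
    and "is_gaussian (distr M borel yt) Y (lam *\<^sub>R mat 1)"
    and "distr M (borel \<Otimes>\<^sub>M (borel \<Otimes>\<^sub>M borel)) (\<lambda>w. (theta0 w, (phi0 w, yt w)))
         = distr M borel theta0 \<Otimes>\<^sub>M (distr M borel phi0 \<Otimes>\<^sub>M distr M borel yt)"
    and "\<forall>w\<in>space M. \<forall>theta.
           (SUP phi. dualiv_obj phix phiz X Z lam nu (theta0 w) (phi0 w) (yt w) (thetastar w) phi)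
           \<le> (SUP phi. dualiv_obj phix phiz X Z lam nu (theta0 w) (phi0 w) (yt w) theta phi)"
  shows
    "let Kxx = gram phix X X; Ksx = gram phix xs X; Kss = gram phix xs xs;
         Kzz = gram phiz Z Z;
         L = Kzz ** matrix_inv (Kzz + nu *\<^sub>R mat 1);
         mu = (Ksx ** matrix_inv (lam *\<^sub>R mat 1 + L ** Kxx)) *v (L *v Y);
         S = Kss - Ksx ** L ** matrix_inv (lam *\<^sub>R mat 1 + Kxx ** L) ** transpose Ksx
     in is_gaussian (distr M borel (\<lambda>w. \<chi> k. rf_fun phix (xs k) (thetastar w))) mu S"
proof -
  interpret prob_space M by fact
  let ?U = "feature_matrix phix X" and ?V = "feature_matrix phiz Z" and ?S = "feature_matrix phix xs"
  interpret D: dual_iv_features ?U ?V lam nu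
    using assms(2,3) by unfold_locales
  let ?mu = "(?S ** transpose ?U ** matrix_inv D.H) *v (D.L *v Y)"
  let ?Sigma = "?S ** transpose ?S - ?S ** transpose ?U ** D.L ** matrix_inv D.G ** transpose (?S ** transpose ?U)"
  have thetastar: "thetastar w = D.theta_hat (theta0 w) (phi0 w) (yt w)" if "w \<in> space M" for w
    using assms(11) that by (intro D.minimiser_eq_theta_hat) (simp add: dualiv_obj_eq_obj assms(2,3))
  have "distr M borel (\<lambda>w. \<chi> k. rf_fun phix (xs k) (thetastar w))
      = distr M borel (\<lambda>w. ?S *v D.theta_hat (theta0 w) (phi0 w) (yt w))"
    by (rule distr_cong) (auto simp: vec_eq_iff rf_fun_eq_feature_matrix thetastar)
  moreover have "is_gaussian (distr M borel (\<lambda>w. ?S *v D.theta_hat (theta0 w) (phi0 w) (yt w))) ?mu ?Sigma"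
  proof (rule is_gaussian_affine_of_indep_gaussians[OF assms(4-6,10,8,7,9),
        where \<alpha> = "D.coef_theta0 ?S" and \<beta> = "D.coef_phi0 ?S" and \<gamma> = "D.coef_y ?S"])
    show "a \<bullet> (?S *v D.theta_hat (theta0 w) (phi0 w) (yt w))
        = D.coef_theta0 ?S a \<bullet> theta0 w + D.coef_phi0 ?S a \<bullet> phi0 w + D.coef_y ?S a \<bullet> yt w" for a w
      by (rule D.theta_hat_functional_affine)
    show "a \<bullet> ?mu = D.coef_theta0 ?S a \<bullet> 0 + D.coef_phi0 ?S a \<bullet> 0 + D.coef_y ?S a \<bullet> Y" for a
      by (simp add: D.coef_y_mean)
    show "a \<bullet> (?Sigma *v a) = D.coef_theta0 ?S a \<bullet> (mat 1 *v D.coef_theta0 ?S a)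
        + D.coef_phi0 ?S a \<bullet> (((lam / nu) *\<^sub>R mat 1) *v D.coef_phi0 ?S a)
        + D.coef_y ?S a \<bullet> ((lam *\<^sub>R mat 1) *v D.coef_y ?S a)" for a
      by (rule D.coef_variance[symmetric])
  qed (use assms(2,3) in \<open>simp_all add: scalar_mat_mult_vector\<close>)
  ultimately show ?thesis
    unfolding Let_def gram_eq_feature_matrix D.H_def D.G_def D.L_def D.R_def D.Kxx_def D.Kzz_def
    by simp
qed

end
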